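(* For $r\ge0$ let $\rho_D(r)$ be the unique positive solution $\rho$ of $\frac{(\rho-1)^3}{(2\rho-1)^2}=r^2$, and let $\rho(r)$ be the unique positive solution $\rho$ of $\frac{1}{\rho^2}\left(2e^{\rho-1}-1\right)=r^2+1$. Then $1+4r^2\le\rho_D(r)\le 2+4r^2$ for all $r\ge0$, and $\rho(r)=1+(1+o(1))\ln(1+r^2)$ as $r\to\infty$. *)

theory Defs
  imports Complex_Main "HOL-Library.Landau_Symbols"
begin

text \<open>rho_D(r): the unique positive solution of (rho-1)^3/(2 rho-1)^2 = r^2
  (the point rho = 1/2, where the left-hand side is undefined, is excluded explicitly).\<close>
definition rhoD :: "real \<Rightarrow> real" where
  "rhoD r = (THE \<rho>. \<rho> > 0 \<and> 2 * \<rho> - 1 \<noteq> 0 \<and> (\<rho> - 1) ^ 3 / (2 * \<rho> - 1) ^ 2 = r ^ 2)"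

definition rho :: "real \<Rightarrow> real" where
  "rho r = (THE \<rho>. \<rho> > 0 \<and> (1 / \<rho> ^ 2) * (2 * exp (\<rho> - 1) - 1) = r ^ 2 + 1)"

end

theory Submission
  imports Defs "HOL-Real_Asymp.Real_Asymp"
begin

text \<open>Both functions are defined implicitly as the root of an equation \<open>F \<rho> = c\<close> whose
  left-hand side is strictly increasing on the relevant range, so each value is pinned down
  by the intermediate value theorem: evaluating \<open>F\<close> at two explicit points that bracket
  \<open>c\<close> bounds the root. For \<open>\<rho>\<^sub>D\<close> the points are \<open>1 + 4r\<^sup>2\<close> and \<open>2 + 4r\<^sup>2\<close>. For \<open>\<rho>\<close>, writing
  \<open>l = ln (1 + r\<^sup>2)\<close>, they are \<open>1 + l\<close> and \<open>1 + l + 3 ln (1 + l)\<close>, and both are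
  asymptotic to \<open>l\<close>.\<close>

definition rhoD_ratio :: "real \<Rightarrow> real" where
  "rhoD_ratio x = (x - 1) ^ 3 / (2 * x - 1) ^ 2"

definition rho_ratio :: "real \<Rightarrow> real" where
  "rho_ratio x = (2 * exp (x - 1) - 1) / x ^ 2"

lemma rhoD_ratio_neg:
  assumes "x < 1" "2 * x \<noteq> 1"
  shows "rhoD_ratio x < 0"
proof -
  have "(x - 1) ^ 3 < 0"
    using assms(1) by (simp add: odd_power_less_zero)
  moreover have "0 < (2 * x - 1) ^ 2"
    using assms(2) by simp
  ultimately show ?thesis
    unfolding rhoD_ratio_def by (simp add: divide_neg_pos)
qed

lemma rhoD_ratio_shift:
  assumes "0 \<le> t"
  shows "rhoD_ratio (1 + t) = t * (t / (2 * t + 1)) ^ 2"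
  using assms unfolding rhoD_ratio_def
  by (simp add: power2_eq_square power3_eq_cube field_simps)

text \<open>After the shift \<open>x = 1 + t\<close>, both factors \<open>t\<close> and \<open>(t / (2t + 1))\<^sup>2\<close> increase.\<close>

lemma strict_mono_on_rhoD_ratio: "strict_mono_on {1..} rhoD_ratio"
proof (rule strict_mono_onI)
  fix a b :: real
  assume "a \<in> {1..}" "b \<in> {1..}" "a < b"
  define t v where "t = a - 1" and "v = b - 1"
  have tv: "a = 1 + t" "b = 1 + v" "0 \<le> t" "t < v"
    using \<open>a \<in> {1..}\<close> \<open>a < b\<close> unfolding t_def v_def by auto
  have "t / (2 * t + 1) < v / (2 * v + 1)"
    using tv by (simp add: field_simps)
  then have "(t / (2 * t + 1)) ^ 2 < (v / (2 * v + 1)) ^ 2"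
    using tv by (intro power_strict_mono) auto
  then show "rhoD_ratio a < rhoD_ratio b"
    using tv by (simp add: rhoD_ratio_shift mult_strict_mono')
qed

lemma continuous_on_rhoD_ratio: "continuous_on {1..} rhoD_ratio"
  unfolding rhoD_ratio_def by (intro continuous_intros) auto

lemma rhoD_ratio_lower_bracket:
  assumes "0 \<le> s"
  shows "rhoD_ratio (1 + 4 * s) \<le> s"
proof -
  have "(4 * s) ^ 3 \<le> s * (8 * s + 1) ^ 2"
    using assms by (simp add: algebra_simps power2_eq_square power3_eq_cube)
  then show ?thesis
    unfolding rhoD_ratio_def using assms by (simp add: divide_le_eq algebra_simps)
qed

lemma rhoD_ratio_upper_bracket:
  assumes "0 \<le> s"
  shows "s \<le> rhoD_ratio (2 + 4 * s)"
proof -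
  have "s * (8 * s + 3) ^ 2 \<le> (4 * s + 1) ^ 3"
    using assms by (simp add: algebra_simps power2_eq_square power3_eq_cube)
  then show ?thesis
    unfolding rhoD_ratio_def using assms by (simp add: le_divide_eq algebra_simps)
qed

lemma rhoD_eqI:
  assumes "1 \<le> x" "rhoD_ratio x = r ^ 2"
  shows "rhoD r = x"
  unfolding rhoD_def
proof (rule the_equality)
  show "x > 0 \<and> 2 * x - 1 \<noteq> 0 \<and> (x - 1) ^ 3 / (2 * x - 1) ^ 2 = r ^ 2"
    using assms unfolding rhoD_ratio_def by auto
next
  fix y
  assume y: "y > 0 \<and> 2 * y - 1 \<noteq> 0 \<and> (y - 1) ^ 3 / (2 * y - 1) ^ 2 = r ^ 2"
  then have ratio_y: "rhoD_ratio y = r ^ 2"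
    unfolding rhoD_ratio_def by simp
  have "1 \<le> y"
  proof (rule ccontr)
    assume "\<not> 1 \<le> y"
    then have "rhoD_ratio y < 0"
      using y by (intro rhoD_ratio_neg) auto
    then show False
      using ratio_y by simp
  qed
  then show "y = x"
    using strict_mono_on_eqD[OF strict_mono_on_rhoD_ratio] assms ratio_y by auto
qed

lemma rhoD_bounds: "1 + 4 * r ^ 2 \<le> rhoD r \<and> rhoD r \<le> 2 + 4 * r ^ 2"
proof -
  have "0 \<le> r ^ 2"
    by simp
  then have "{1 + 4 * r ^ 2 .. 2 + 4 * r ^ 2} \<subseteq> {1..}"
    by auto
  then have "continuous_on {1 + 4 * r ^ 2 .. 2 + 4 * r ^ 2} rhoD_ratio"
    by (rule continuous_on_subset[OF continuous_on_rhoD_ratio])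
  moreover have "rhoD_ratio (1 + 4 * r ^ 2) \<le> r ^ 2" "r ^ 2 \<le> rhoD_ratio (2 + 4 * r ^ 2)"
    by (simp_all add: rhoD_ratio_lower_bracket rhoD_ratio_upper_bracket)
  ultimately obtain x where x: "1 + 4 * r ^ 2 \<le> x" "x \<le> 2 + 4 * r ^ 2" "rhoD_ratio x = r ^ 2"
    using IVT'[of rhoD_ratio "1 + 4 * r ^ 2" "r ^ 2" "2 + 4 * r ^ 2"] by auto
  have "1 \<le> x"
    using x(1) \<open>0 \<le> r ^ 2\<close> by linarith
  then have "rhoD r = x"
    using x(3) by (rule rhoD_eqI)
  with x show ?thesis
    by simp
qed

lemma exp_mult_pred_plus_one_pos:
  fixes t :: real
  assumes "t \<noteq> 0"
  shows "0 < exp t * (t - 1) + 1"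
proof (cases "1 \<le> t")
  case False
  have "(1 - t) * exp t < exp (- t) * exp t"
    using assms False exp_minus_greater[of t] by simp
  then show ?thesis
    by (simp add: algebra_simps flip: exp_add)
qed (simp add: add_nonneg_pos)

lemma rho_ratio_deriv:
  assumes "0 < x"
  shows "(rho_ratio has_real_derivative 2 * (exp (x - 1) * (x - 2) + 1) / x ^ 3) (at x)"
  unfolding rho_ratio_def[abs_def] using assms
  by (auto intro!: derivative_eq_intros simp: field_simps power2_eq_square power3_eq_cube)

lemma continuous_on_rho_ratio: "continuous_on {0<..} rho_ratio"
  unfolding rho_ratio_def by (intro continuous_intros) auto

text \<open>The derivative vanishes only at \<open>x = 1\<close>, so we argue on both sides of \<open>1\<close> separately.\<close>

lemma strict_mono_on_rho_ratio: "strict_mono_on {0<..} rho_ratio"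
proof -
  have piece: "rho_ratio a < rho_ratio b" if "0 < a" "a < b" "b \<le> 1 \<or> 1 \<le> a" for a b
  proof (rule DERIV_pos_imp_increasing_open[OF \<open>a < b\<close>])
    fix x
    assume "a < x" "x < b"
    then have "0 < x" "x - 1 \<noteq> 0"
      using that by auto
    then show "\<exists>y. (rho_ratio has_real_derivative y) (at x) \<and> 0 < y"
      using rho_ratio_deriv exp_mult_pred_plus_one_pos[of "x - 1"] by fastforce
  next
    show "continuous_on {a..b} rho_ratio"
      using \<open>0 < a\<close> by (auto intro: continuous_on_subset[OF continuous_on_rho_ratio])
  qed
  show ?thesis
  proof (rule strict_mono_onI)
    fix a b :: real
    assume "a \<in> {0<..}" "b \<in> {0<..}" "a < b"
    then show "rho_ratio a < rho_ratio b"
    proof (cases "a < 1 \<and> 1 < b")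
      case True
      then show ?thesis
        using piece[of a 1] piece[of 1 b] \<open>a \<in> {0<..}\<close> by auto
    qed (use piece[of a b] in auto)
  qed
qed

lemma rho_ratio_lower_bracket:
  assumes "1 \<le> l"
  shows "rho_ratio (1 + l) \<le> exp l"
proof -
  have "2 \<le> (1 + l) ^ 2"
    using assms power_mono[of 2 "1 + l" 2] by simp
  then have "exp l * 2 \<le> exp l * (1 + l) ^ 2"
    by (rule mult_left_mono) simp
  then have "2 * exp l - 1 \<le> exp l * (1 + l) ^ 2"
    by linarith
  moreover have "0 < (1 + l) ^ 2"
    using assms by simp
  ultimately show ?thesis
    unfolding rho_ratio_def by (simp add: pos_divide_le_eq)
qed

lemma rho_ratio_upper_bracket:
  assumes "6 \<le> l"
  shows "exp l \<le> rho_ratio (1 + l + 3 * ln (1 + l))"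
proof -
  define u where "u = 1 + l + 3 * ln (1 + l)"
  have ln_bounds: "0 \<le> ln (1 + l)" "ln (1 + l) \<le> l"
    using assms ln_le_minus_one[of "1 + l"] by auto
  then have "0 < u"
    using assms unfolding u_def by linarith
  have "u ^ 2 \<le> (1 + 4 * l) ^ 2"
    using assms ln_bounds unfolding u_def by (intro power_mono) auto
  also have "(1 + 4 * l) ^ 2 \<le> 2 * (1 + l) ^ 3 - 1"
  proof -
    have "2 * (1 + l) ^ 3 - 1 - (1 + 4 * l) ^ 2 = 2 * l * ((l - 6) * (l + 1) + 5)"
      by (simp add: algebra_simps power2_eq_square power3_eq_cube)
    moreover have "0 \<le> 2 * l * ((l - 6) * (l + 1) + 5)"
      using assms by (intro mult_nonneg_nonneg add_nonneg_nonneg) auto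
    ultimately show ?thesis
      by linarith
  qed
  finally have "exp l * u ^ 2 \<le> exp l * (2 * (1 + l) ^ 3 - 1)"
    by simp
  also have "\<dots> \<le> 2 * exp (u - 1) - 1"
  proof -
    have "exp (3 * ln (1 + l)) = exp (ln (1 + l)) ^ 3"
      by (metis exp_of_nat_mult of_nat_numeral)
    then have "exp (u - 1) = exp l * (1 + l) ^ 3"
      using assms by (simp add: u_def exp_add)
    moreover have "1 \<le> exp l"
      using assms by simp
    ultimately show ?thesis
      by (simp add: algebra_simps)
  qed
  finally show ?thesis
    unfolding rho_ratio_def u_def[symmetric] using \<open>0 < u\<close> by (simp add: le_divide_eq)
qed

lemma rho_eqI:
  assumes "0 < x" "rho_ratio x = r ^ 2 + 1"
  shows "rho r = x"
  unfolding rho_def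
proof (rule the_equality)
  show "x > 0 \<and> 1 / x ^ 2 * (2 * exp (x - 1) - 1) = r ^ 2 + 1"
    using assms unfolding rho_ratio_def by simp
next
  fix y
  assume "y > 0 \<and> 1 / y ^ 2 * (2 * exp (y - 1) - 1) = r ^ 2 + 1"
  then show "y = x"
    using strict_mono_on_eqD[OF strict_mono_on_rho_ratio, of x y] assms
    unfolding rho_ratio_def by simp
qed

lemma rho_bounds:
  assumes "6 \<le> ln (1 + r ^ 2)"
  shows "rho r - 1 \<in> {ln (1 + r ^ 2) .. ln (1 + r ^ 2) + 3 * ln (1 + ln (1 + r ^ 2))}"
proof -
  define l where "l = ln (1 + r ^ 2)"
  have l6: "6 \<le> l" and exp_l: "exp l = r ^ 2 + 1"
    using assms unfolding l_def by (simp_all add: add_pos_nonneg)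
  have "0 \<le> ln (1 + l)"
    using l6 by simp
  moreover have "continuous_on {1 + l .. 1 + l + 3 * ln (1 + l)} rho_ratio"
    using l6 by (auto intro: continuous_on_subset[OF continuous_on_rho_ratio])
  moreover have "rho_ratio (1 + l) \<le> exp l" "exp l \<le> rho_ratio (1 + l + 3 * ln (1 + l))"
    using l6 by (simp_all add: rho_ratio_lower_bracket rho_ratio_upper_bracket)
  ultimately obtain x where x: "1 + l \<le> x" "x \<le> 1 + l + 3 * ln (1 + l)" "rho_ratio x = exp l"
    using IVT'[of rho_ratio "1 + l" "exp l" "1 + l + 3 * ln (1 + l)"] by auto
  moreover have "rho r = x"
    using x l6 exp_l by (intro rho_eqI) auto
  ultimately show ?thesis
    unfolding l_def by simp
qed

theorem lemma1:
  shows "(\<forall>r::real. r \<ge> 0 \<longrightarrow> 1 + 4 * r ^ 2 \<le> rhoD r \<and> rhoD r \<le> 2 + 4 * r ^ 2)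
    \<and> (\<lambda>r. rho r - 1) \<sim>[at_top] (\<lambda>r. ln (1 + r ^ 2))"
proof (intro conjI allI impI)
  fix r :: real
  show "1 + 4 * r ^ 2 \<le> rhoD r" "rhoD r \<le> 2 + 4 * r ^ 2"
    using rhoD_bounds by auto
next
  have "\<forall>\<^sub>F r in at_top. 6 \<le> ln (1 + r ^ 2 :: real)"
    by real_asymp
  then have bounds: "\<forall>\<^sub>F r in at_top.
      rho r - 1 \<in> {ln (1 + r ^ 2) .. ln (1 + r ^ 2) + 3 * ln (1 + ln (1 + r ^ 2))}"
    by (rule eventually_mono) (rule rho_bounds)
  have "(\<lambda>r. ln (1 + r ^ 2) + 3 * ln (1 + ln (1 + r ^ 2))) \<sim>[at_top] (\<lambda>r::real. ln (1 + r ^ 2))"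
    by real_asymp
  from asymp_equiv_refl this bounds
  show "(\<lambda>r. rho r - 1) \<sim>[at_top] (\<lambda>r. ln (1 + r ^ 2))"
    by (rule asymp_equiv_sandwich_real)
qed

end
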